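(* Let $1\le i<s\le u$ and let $\mathcal H$ be an $s$-graph with $\Delta_i(\mathcal H)\le\binom{x-i}{s-i}$ for some real $x\ge s$. If $x<u$ then $\mathcal H$ has no $u$-cliques. Otherwise, the $u$-graph $\mathcal U=\mathcal K^u(\mathcal H)$ (whose edges are the $u$-cliques of $\mathcal H$) satisfies $\Delta_i(\mathcal U)\le\binom{x-i}{u-i}$.
   Context: An $s$-graph is a family of $s$-subsets (edges) of a vertex set $V$. For $|I|=i$, $d_{\mathcal H}(I)$ is the number of edges containing $I$ and $\Delta_i(\mathcal H)=\max_{|I|=i}d_{\mathcal H}(I)$. For $u\ge s$, a $u$-clique of $\mathcal H$ is a $u$-set all of whose $s$-subsets are edges; $\mathcal K^u(\mathcal H)$ is the set of $u$-cliques. For real $x$, $\binom{x}{k}=x(x-1)\cdots(x-k+1)/k!$. *)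

theory Defs
  imports Complex_Main
begin

definition is_sgraph :: "'a set \<Rightarrow> nat \<Rightarrow> 'a set set \<Rightarrow> bool" where
  "is_sgraph V s H \<longleftrightarrow> finite V \<and> (\<forall>e\<in>H. e \<subseteq> V \<and> card e = s)"

definition hdeg :: "'a set set \<Rightarrow> 'a set \<Rightarrow> nat" where
  "hdeg H I = card {e\<in>H. I \<subseteq> e}"

definition maxdeg :: "'a set \<Rightarrow> 'a set set \<Rightarrow> nat \<Rightarrow> nat" where
  "maxdeg V H i = Max ({hdeg H I | I. I \<subseteq> V \<and> card I = i} \<union> {0})"

definition cliques :: "'a set \<Rightarrow> nat \<Rightarrow> 'a set set \<Rightarrow> nat \<Rightarrow> 'a set set" where
  "cliques V s H u = {U. U \<subseteq> V \<and> card U = u \<and> (\<forall>S. S \<subseteq> U \<and> card S = s \<longrightarrow> S \<in> H)}"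

end

theory Submission
  imports Defs
begin

text \<open>
  Removing an i-set I from the u-cliques of H through I yields (u - i)-cliques of the link of I,
  an (s - i)-graph with at most C(x - i, s - i) edges; so it suffices to show that a k-graph with
  at most C(y, k) edges (k \<ge> 1, y \<ge> k) has at most C(y, m) m-cliques, and none if y < m.
  Since the m-cliques are the m-cliques of the (m - 1)-cliques, this follows by iterating the
  one-step bound: a k-graph G with |G| \<le> C(y, k) has at most |G| (y - k) / (k + 1) cliques of
  size k + 1. The latter is proved by induction on k and |G|: if some vertex v has degree
  exceeding C(y - 1, k - 1), the edges avoiding v number fewer than C(y - 1, k) and carry all
  cliques missing v, while each clique through v loses v to an edge avoiding v; otherwise every
  link has at most C(y - 1, k - 1) edges, and the bound for k - 1 applied to all links is
  summed by double counting.
\<close>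

lemma gbinomial_nonneg:
  fixes a :: real
  assumes "real k - 1 \<le> a"
  shows "0 \<le> a gchoose k"
  unfolding gbinomial_prod_rev using assms
  by (force intro!: divide_nonneg_pos prod_nonneg)

lemma gbinomial_mono_weak:
  fixes a b :: real
  assumes "real k - 1 \<le> a" "a \<le> b"
  shows "a gchoose k \<le> b gchoose k"
  unfolding gbinomial_prod_rev using assms
  by (force intro!: divide_right_mono prod_mono)

lemma gbinomial_le_1:
  fixes a :: real
  assumes "real k - 1 \<le> a" "a \<le> real k"
  shows "a gchoose k \<le> 1"
proof -
  have "a gchoose k \<le> real k gchoose k"
    using assms by (rule gbinomial_mono_weak)
  also have "\<dots> = 1"
    using binomial_gbinomial[of k k, where 'a = real] by simp
  finally show ?thesis .
qed

lemma gbinomial_Suc_real: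
  fixes a :: real
  shows "a gchoose Suc k = (a gchoose k) * (a - real k) / (real k + 1)"
  using gbinomial_mult_1[of a k] by (simp add: field_simps)

lemma real_choose_2: "real (n choose 2) = real n * (real n - 1) / 2"
  using gbinomial_Suc_real[of "real n" 1] by (simp add: binomial_gbinomial numeral_2_eq_2)

lemma finite_sgraph: "is_sgraph V s H \<Longrightarrow> finite H"
  unfolding is_sgraph_def by (rule finite_subset[of _ "Pow V"]) auto

lemma finite_cliques: "finite V \<Longrightarrow> finite (cliques V s H u)"
  unfolding cliques_def by (rule finite_subset[of _ "Pow V"]) auto

lemma is_sgraph_cliques: "finite V \<Longrightarrow> is_sgraph V u (cliques V s H u)"
  unfolding is_sgraph_def cliques_def by auto

lemma cliques_self:
  assumes "is_sgraph V k L"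
  shows "cliques V k L k = L"
proof -
  have "S = e" if "e \<in> L" "S \<subseteq> e" "card S = k" for e S
    using assms that unfolding is_sgraph_def by (metis card_subset_eq finite_subset)
  then show ?thesis
    using assms unfolding is_sgraph_def cliques_def by blast
qed

lemma cliques_empty:
  assumes "k \<le> m"
  shows "cliques V k {} m = {}"
proof -
  have "\<exists>S. S \<subseteq> U \<and> card S = k" if "card U = m" for U :: "'a set"
    using obtain_subset_with_card_n[of k U] assms that by metis
  then show ?thesis
    unfolding cliques_def by blast
qed

lemma cliques_Suc:
  assumes "k \<le> m"
  shows "cliques V k L (Suc m) = cliques V m (cliques V k L m) (Suc m)"
proof -
  have "(\<forall>S. S \<subseteq> U \<and> card S = k \<longrightarrow> S \<in> L) \<longleftrightarrow>
      (\<forall>T. T \<subseteq> U \<and> card T = m \<longrightarrow> (\<forall>S. S \<subseteq> T \<and> card S = k \<longrightarrow> S \<in> L))"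
    if "card U = Suc m" for U :: "'a set"
  proof -
    have "finite U" using that card.infinite by fastforce
    then have "\<exists>T. S \<subseteq> T \<and> T \<subseteq> U \<and> card T = m" if "S \<subseteq> U" "card S = k" for S
      using exists_subset_between[of S m U] that assms \<open>card U = Suc m\<close> by auto
    then show ?thesis by (metis subset_trans)
  qed
  moreover have "T \<subseteq> V" if "T \<subseteq> U" "U \<subseteq> V" for T U :: "'a set"
    using that by (rule subset_trans)
  ultimately show ?thesis
    unfolding cliques_def by (auto simp only: mem_Collect_eq)
qed

definition link :: "'a set set \<Rightarrow> 'a set \<Rightarrow> 'a set set" where
  "link G I = (\<lambda>e. e - I) ` {e\<in>G. I \<subseteq> e}"

lemma card_link: "card (link G I) = hdeg G I"
  unfolding link_def hdeg_def by (rule card_image) (auto intro: inj_onI simp: Diff_partition)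

lemma is_sgraph_link:
  assumes "is_sgraph V s G"
  shows "is_sgraph V (s - card I) (link G I)"
  using assms unfolding is_sgraph_def link_def by (auto simp: card_Diff_subset finite_subset)

lemma Diff_in_cliques_link:
  assumes "finite V" "U \<in> cliques V s G u" "I \<subseteq> U" "card I \<le> s"
  shows "U - I \<in> cliques V (s - card I) (link G I) (u - card I)"
proof -
  have UV: "U \<subseteq> V" and cU: "card U = u" and clique: "\<And>S. S \<subseteq> U \<Longrightarrow> card S = s \<Longrightarrow> S \<in> G"
    using assms(2) unfolding cliques_def by auto
  have fU: "finite U" using UV assms(1) by (rule finite_subset)
  have fI: "finite I" using assms(3) fU by (rule finite_subset)
  have "S \<in> link G I" if S: "S \<subseteq> U - I" "card S = s - card I" for S
  proof -
    have "finite S" using S(1) fU by (meson finite_Diff finite_subset)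
    then have "card (S \<union> I) = card S + card I"
      using fI S(1) by (intro card_Un_disjoint) auto
    then have "card (S \<union> I) = s" using S(2) assms(4) by simp
    moreover have "S \<union> I \<subseteq> U" using S(1) assms(3) by blast
    ultimately have "S \<union> I \<in> {e\<in>G. I \<subseteq> e}" using clique by blast
    moreover have "S = (S \<union> I) - I" using S(1) by blast
    ultimately show ?thesis unfolding link_def by (rule rev_image_eqI)
  qed
  moreover have "card (U - I) = u - card I" using cU fI assms(3) by (simp add: card_Diff_subset)
  moreover have "U - I \<subseteq> V" using UV by blast
  ultimately show ?thesis unfolding cliques_def by blast
qed

lemma hdeg_cliques_le_link:
  assumes "finite V" "card I \<le> s"
  shows "hdeg (cliques V s G u) I \<le> card (cliques V (s - card I) (link G I) (u - card I))"
  unfolding hdeg_def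
proof (rule card_inj_on_le[of "\<lambda>U. U - I"])
  show "inj_on (\<lambda>U. U - I) {U \<in> cliques V s G u. I \<subseteq> U}"
    by (auto intro: inj_onI simp: Diff_partition)
  show "(\<lambda>U. U - I) ` {U \<in> cliques V s G u. I \<subseteq> U} \<subseteq> cliques V (s - card I) (link G I) (u - card I)"
    using Diff_in_cliques_link[OF assms(1) _ _ assms(2)] by blast
  show "finite (cliques V (s - card I) (link G I) (u - card I))"
    using assms(1) by (rule finite_cliques)
qed

lemma card_eq_hdeg_add_card_avoiding:
  assumes "finite G"
  shows "card G = hdeg G {v} + card {e\<in>G. v \<notin> e}"
proof -
  have "card ({e\<in>G. {v} \<subseteq> e} \<union> {e\<in>G. v \<notin> e}) = hdeg G {v} + card {e\<in>G. v \<notin> e}"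
    unfolding hdeg_def using assms by (intro card_Un_disjoint) auto
  moreover have "{e\<in>G. {v} \<subseteq> e} \<union> {e\<in>G. v \<notin> e} = G"
    by auto
  ultimately show ?thesis by simp
qed

lemma card_cliques_Suc_le_avoiding:
  fixes v :: 'a
  assumes G: "is_sgraph V s G"
  defines "Gv \<equiv> {e\<in>G. v \<notin> e}"
  shows "card (cliques V s G (Suc s)) \<le> card Gv + card (cliques V s Gv (Suc s))"
proof -
  have fV: "finite V" using G by (simp add: is_sgraph_def)
  let ?Cv = "{U \<in> cliques V s G (Suc s). v \<in> U}"
  have "card ?Cv \<le> card Gv"
  proof (rule card_inj_on_le[of "\<lambda>U. U - {v}"])
    show "inj_on (\<lambda>U. U - {v}) ?Cv"
      by (auto intro: inj_onI simp: Diff_partition)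
    have "U - {v} \<in> G" if U: "U \<in> cliques V s G (Suc s)" "v \<in> U" for U
    proof -
      have "card U = Suc s" "\<And>S. S \<subseteq> U \<Longrightarrow> card S = s \<Longrightarrow> S \<in> G"
        using U(1) unfolding cliques_def by auto
      then show ?thesis
        using U(2) by (metis Diff_subset card_Diff_singleton diff_Suc_1 card.infinite nat.distinct(1))
    qed
    then show "(\<lambda>U. U - {v}) ` ?Cv \<subseteq> Gv"
      unfolding Gv_def by blast
    show "finite Gv"
      using finite_sgraph[OF G] unfolding Gv_def by simp
  qed
  moreover have "cliques V s G (Suc s) \<subseteq> ?Cv \<union> cliques V s Gv (Suc s)"
    unfolding cliques_def Gv_def by blast
  then have "card (cliques V s G (Suc s)) \<le> card (?Cv \<union> cliques V s Gv (Suc s))"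
    using finite_cliques[OF fV] by (intro card_mono) auto
  ultimately show ?thesis
    using card_Un_le[of ?Cv "cliques V s Gv (Suc s)"] by linarith
qed

lemma sum_hdeg_singleton:
  assumes "is_sgraph V s F"
  shows "(\<Sum>v\<in>V. hdeg F {v}) = s * card F"
proof -
  have fV: "finite V" and fF: "finite F" and F: "\<And>e. e \<in> F \<Longrightarrow> e \<subseteq> V \<and> card e = s"
    using assms finite_sgraph unfolding is_sgraph_def by auto
  have "hdeg F {v} = (\<Sum>e\<in>F. if v \<in> e then 1 else 0)" for v
  proof -
    have "hdeg F {v} = card {e\<in>F. v \<in> e}" by (simp add: hdeg_def)
    also have "\<dots> = (\<Sum>e\<in>F. if v \<in> e then 1 else 0)"
      unfolding card_eq_sum by (rule sum.inter_filter[OF fF])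
    finally show ?thesis .
  qed
  then have "(\<Sum>v\<in>V. hdeg F {v}) = (\<Sum>v\<in>V. \<Sum>e\<in>F. if v \<in> e then 1 else 0)"
    by simp
  also have "\<dots> = (\<Sum>e\<in>F. \<Sum>v\<in>V. if v \<in> e then 1 else 0)"
    by (rule sum.swap)
  also have "\<dots> = (\<Sum>e\<in>F. card e)"
  proof (rule sum.cong[OF refl])
    fix e assume "e \<in> F"
    then have "e \<subseteq> V" using F by simp
    then have "{v\<in>V. v \<in> e} = e" by blast
    then show "(\<Sum>v\<in>V. if v \<in> e then 1 else 0) = card e"
      unfolding card_eq_sum sum.inter_filter[OF fV, symmetric] by simp
  qed
  also have "\<dots> = (\<Sum>e\<in>F. s)"
    using F by (intro sum.cong) auto
  finally show ?thesis by simp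
qed

lemma card_cliques_2_le:
  assumes G: "is_sgraph V 1 G" and y: "real (card G) \<le> y"
  shows "real (card (cliques V 1 G 2)) \<le> real (card G) * (y - 1) / 2"
proof -
  define W where "W = {v. {v} \<in> G}"
  have "G = (\<lambda>v. {v}) ` W"
  proof (intro equalityI subsetI)
    fix e assume "e \<in> G"
    moreover obtain v where "e = {v}"
      using G \<open>e \<in> G\<close> unfolding is_sgraph_def by (metis card_1_singletonE)
    ultimately show "e \<in> (\<lambda>v. {v}) ` W" unfolding W_def by blast
  qed (auto simp: W_def)
  then have cardW: "card G = card W"
    by (simp add: card_image)
  have "W \<subseteq> V"
    using G unfolding is_sgraph_def W_def by auto
  then have fW: "finite W"
    using G unfolding is_sgraph_def by (blast intro: finite_subset)
  have "cliques V 1 G 2 \<subseteq> {B. B \<subseteq> W \<and> card B = 2}"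
    unfolding cliques_def W_def by auto
  then have "card (cliques V 1 G 2) \<le> card {B. B \<subseteq> W \<and> card B = 2}"
    using fW by (intro card_mono) simp_all
  also have "\<dots> = card W choose 2"
    using fW by (rule n_subsets)
  finally have "card (cliques V 1 G 2) \<le> card W choose 2" .
  then have "real (card (cliques V 1 G 2)) \<le> real (card W) * (real (card W) - 1) / 2"
    using real_choose_2[of "card W"] by linarith
  also have "\<dots> \<le> real (card W) * (y - 1) / 2"
    using y cardW by (intro divide_right_mono mult_left_mono) auto
  finally show ?thesis using cardW by simp
qed

lemma card_cliques_Suc_le_of_low_degree:
  fixes G :: "'a set set" and y :: real
  assumes IH: "\<And>G' y'. is_sgraph V k G' \<Longrightarrow> real k \<le> y' \<Longrightarrow> real (card G') \<le> y' gchoose k \<Longrightarrow>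
      real (card (cliques V k G' (Suc k))) \<le> real (card G') * (y' - real k) / (real k + 1)"
    and G: "is_sgraph V (Suc k) G" and y: "real (Suc k) \<le> y"
    and deg: "\<And>v. v \<in> V \<Longrightarrow> real (hdeg G {v}) \<le> (y - 1) gchoose k"
  shows "real (card (cliques V (Suc k) G (Suc (Suc k))))
    \<le> real (card G) * (y - real (Suc k)) / (real (Suc k) + 1)"
proof -
  define C where "C = cliques V (Suc k) G (Suc (Suc k))"
  define t where "t = y - real (Suc k)"
  have fV: "finite V" using G by (simp add: is_sgraph_def)
  have vertex: "real (hdeg C {v}) \<le> real (hdeg G {v}) * t / (real k + 1)" if "v \<in> V" for v
  proof -
    have "hdeg C {v} \<le> card (cliques V k (link G {v}) (Suc k))"
      using hdeg_cliques_le_link[OF fV, of "{v}" "Suc k" G "Suc (Suc k)"] unfolding C_def by simp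
    moreover have "real (card (cliques V k (link G {v}) (Suc k)))
        \<le> real (hdeg G {v}) * ((y - 1) - real k) / (real k + 1)"
      using IH[of "link G {v}" "y - 1"] is_sgraph_link[OF G, of "{v}"] y deg[OF that]
      by (simp add: card_link)
    ultimately show ?thesis unfolding t_def by (simp add: algebra_simps)
  qed
  have "real (card C) * (real k + 2) = (\<Sum>v\<in>V. real (hdeg C {v}))"
    using sum_hdeg_singleton[OF is_sgraph_cliques[OF fV, of "Suc (Suc k)" "Suc k" G]]
    unfolding C_def by (simp flip: of_nat_sum add: algebra_simps)
  also have "\<dots> \<le> (\<Sum>v\<in>V. real (hdeg G {v}) * t / (real k + 1))"
    by (rule sum_mono) (rule vertex)
  also have "\<dots> = (\<Sum>v\<in>V. real (hdeg G {v})) * t / (real k + 1)"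
    by (simp add: sum_divide_distrib sum_distrib_right)
  also have "\<dots> = real (card G) * t"
    using sum_hdeg_singleton[OF G] by (simp flip: of_nat_sum add: field_simps)
  finally show ?thesis
    unfolding C_def t_def by (simp add: field_simps)
qed

lemma card_avoiding_lt_of_high_degree:
  fixes y :: real
  assumes "finite G" "real (card G) \<le> y gchoose Suc k" "(y - 1) gchoose k < real (hdeg G {v})"
  shows "real (card {e\<in>G. v \<notin> e}) < (y - 1) gchoose Suc k"
  using card_eq_hdeg_add_card_avoiding[OF assms(1), of v] assms(2,3) gbinomial_Suc_Suc[of "y - 1" k]
  by simp

lemma cliques_Suc_eq_empty_of_high_degree:
  fixes G :: "'a set set" and y :: real
  assumes G: "is_sgraph V (Suc k) G" and y: "real (Suc k) \<le> y" "y < real (Suc (Suc k))"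
    and bound: "real (card G) \<le> y gchoose Suc k"
    and deg: "(y - 1) gchoose k < real (hdeg G {v})"
  shows "cliques V (Suc k) G (Suc (Suc k)) = {}"
proof -
  define Gv where "Gv = {e\<in>G. v \<notin> e}"
  have "card Gv = 0"
    using card_avoiding_lt_of_high_degree[OF finite_sgraph[OF G] bound deg]
      gbinomial_le_1[of "Suc k" "y - 1"] y unfolding Gv_def by simp
  then have "Gv = {}"
    using finite_sgraph[OF G] unfolding Gv_def by simp
  then have "card (cliques V (Suc k) G (Suc (Suc k))) = 0"
    using card_cliques_Suc_le_avoiding[OF G, of v] cliques_empty[of "Suc k" "Suc (Suc k)" V]
    unfolding Gv_def[symmetric] by simp
  moreover have "finite V" using G by (simp add: is_sgraph_def)
  ultimately show ?thesis
    by (simp add: finite_cliques)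
qed

lemma card_cliques_Suc_le_of_high_degree:
  fixes G :: "'a set set" and y :: real
  assumes IH: "\<And>G'. card G' < card G \<Longrightarrow> is_sgraph V (Suc k) G' \<Longrightarrow> real (Suc k) \<le> y - 1 \<Longrightarrow>
      real (card G') \<le> (y - 1) gchoose Suc k \<Longrightarrow>
      real (card (cliques V (Suc k) G' (Suc (Suc k))))
        \<le> real (card G') * (y - 1 - real (Suc k)) / (real (Suc k) + 1)"
    and G: "is_sgraph V (Suc k) G" and y: "real (Suc (Suc k)) \<le> y"
    and bound: "real (card G) \<le> y gchoose Suc k"
    and deg: "(y - 1) gchoose k < real (hdeg G {v})"
  shows "real (card (cliques V (Suc k) G (Suc (Suc k))))
    \<le> real (card G) * (y - real (Suc k)) / (real (Suc k) + 1)"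
proof -
  define Gv where "Gv = {e\<in>G. v \<notin> e}"
  define C where "C = cliques V (Suc k) G (Suc (Suc k))"
  define Cv where "Cv = cliques V (Suc k) Gv (Suc (Suc k))"
  define g where "g = (y - 1) gchoose k"
  define t where "t = y - real (Suc k)"
  have Gv: "is_sgraph V (Suc k) Gv" using G unfolding Gv_def is_sgraph_def by simp
  have split: "card G = hdeg G {v} + card Gv"
    unfolding Gv_def using finite_sgraph[OF G] by (rule card_eq_hdeg_add_card_avoiding)
  have Gv_less: "real (card Gv) < (y - 1) gchoose Suc k"
    unfolding Gv_def using finite_sgraph[OF G] bound deg by (rule card_avoiding_lt_of_high_degree)
  have "0 \<le> g" unfolding g_def using y by (intro gbinomial_nonneg) simp
  then have "card Gv < card G" using split deg unfolding g_def by linarith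
  then have IHv: "real (card Cv) \<le> real (card Gv) * (t - 1) / (real k + 2)"
    using IH[OF _ Gv] y Gv_less unfolding Cv_def t_def by (simp add: algebra_simps)
  have "real (card Gv) * (real k + 1) \<le> ((y - 1) gchoose Suc k) * (real k + 1)"
    using Gv_less by (intro mult_right_mono) auto
  also have "\<dots> = g * t"
    unfolding g_def t_def gbinomial_Suc_real by (simp add: field_simps)
  also have "\<dots> \<le> real (hdeg G {v}) * t"
    using deg y unfolding g_def t_def by (intro mult_right_mono) auto
  finally have key: "real (card Gv) * (real k + 1) \<le> real (hdeg G {v}) * t" .
  have "real (card C) \<le> real (card Gv) + real (card Cv)"
    using card_cliques_Suc_le_avoiding[OF G, of v] unfolding C_def Cv_def Gv_def by linarith
  also have "\<dots> \<le> real (card Gv) + real (card Gv) * (t - 1) / (real k + 2)"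
    using IHv by linarith
  also have "\<dots> = (real (card Gv) * (real k + 1) + real (card Gv) * t) / (real k + 2)"
    by (simp add: field_simps)
  also have "\<dots> \<le> (real (hdeg G {v}) * t + real (card Gv) * t) / (real k + 2)"
    using key by (intro divide_right_mono) auto
  also have "\<dots> = real (card G) * t / (real k + 2)"
    using split by (simp add: algebra_simps)
  finally show ?thesis
    unfolding C_def t_def by (simp add: algebra_simps)
qed

lemma card_cliques_Suc_le_step:
  fixes G :: "'a set set" and y :: real
  assumes IH: "\<And>G' y'. is_sgraph V k G' \<Longrightarrow> real k \<le> y' \<Longrightarrow> real (card G') \<le> y' gchoose k \<Longrightarrow>
      real (card (cliques V k G' (Suc k))) \<le> real (card G') * (y' - real k) / (real k + 1)"
  shows "is_sgraph V (Suc k) G \<Longrightarrow> real (Suc k) \<le> y \<Longrightarrow> real (card G) \<le> y gchoose Suc k \<Longrightarrow>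
      real (card (cliques V (Suc k) G (Suc (Suc k))))
        \<le> real (card G) * (y - real (Suc k)) / (real (Suc k) + 1)"
proof (induction "card G" arbitrary: G y rule: less_induct)
  case less
  show ?case
  proof (cases "\<exists>v. (y - 1) gchoose k < real (hdeg G {v})")
    case True
    then obtain v where v: "(y - 1) gchoose k < real (hdeg G {v})" ..
    show ?thesis
    proof (cases "real (Suc (Suc k)) \<le> y")
      case True
      show ?thesis
        by (rule card_cliques_Suc_le_of_high_degree[OF _ less.prems(1) True less.prems(3) v])
          (rule less.hyps)
    next
      case False
      then have "cliques V (Suc k) G (Suc (Suc k)) = {}"
        using cliques_Suc_eq_empty_of_high_degree[OF less.prems(1,2) _ less.prems(3) v] by simp
      then show ?thesis
        using less.prems(2) by simp
    qed
  next
    case False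
    then have "real (hdeg G {v}) \<le> (y - 1) gchoose k" for v
      by (simp add: not_less)
    then show ?thesis
      using card_cliques_Suc_le_of_low_degree[OF IH less.prems(1,2)] by blast
  qed
qed

lemma card_cliques_Suc_le:
  fixes G :: "'a set set" and y :: real
  assumes "is_sgraph V k G" "1 \<le> k" "real k \<le> y" "real (card G) \<le> y gchoose k"
  shows "real (card (cliques V k G (Suc k))) \<le> real (card G) * (y - real k) / (real k + 1)"
  using assms(2,1,3,4)
proof (induction k arbitrary: G y rule: nat_induct_at_least)
  \<comment> \<open>The bound fails for k = 0 (G = {{}} makes every vertex a clique), so links of 1-graphs
    cannot be handled by the step and k = 1 is the base case.\<close>
  case base
  then show ?case
    using card_cliques_2_le[of V G y] by (simp add: numeral_2_eq_2)
next
  case (Suc k)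
  show ?case
    by (rule card_cliques_Suc_le_step[OF Suc.IH]) (use Suc.prems in simp_all)
qed

lemma card_cliques_Suc_le_gbinomial:
  fixes G :: "'a set set" and y :: real
  assumes G: "is_sgraph V k G" "1 \<le> k" and y: "real (Suc k) \<le> y"
    and bound: "real (card G) \<le> y gchoose k"
  shows "real (card (cliques V k G (Suc k))) \<le> y gchoose Suc k"
proof -
  have "real (card (cliques V k G (Suc k))) \<le> real (card G) * (y - real k) / (real k + 1)"
    using y bound by (intro card_cliques_Suc_le[OF G]) auto
  also have "\<dots> \<le> (y gchoose k) * (y - real k) / (real k + 1)"
    using y bound by (intro divide_right_mono mult_right_mono) auto
  finally show ?thesis
    by (simp add: gbinomial_Suc_real)
qed

lemma cliques_Suc_eq_empty:
  fixes G :: "'a set set" and y :: real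
  assumes G: "is_sgraph V k G" "1 \<le> k" and y: "real k \<le> y" "y < real (Suc k)"
    and bound: "real (card G) \<le> y gchoose k"
  shows "cliques V k G (Suc k) = {}"
proof -
  have "y gchoose k \<le> real (Suc k) gchoose k"
    using y by (intro gbinomial_mono) auto
  moreover have "real (Suc k) gchoose k = real k + 1"
    using binomial_gbinomial[of "Suc k" k, where 'a = real] by simp
  ultimately have "real (card G) \<le> real k + 1"
    using bound by linarith
  then have "real (card G) * (y - real k) / (real k + 1) \<le> (real k + 1) * (y - real k) / (real k + 1)"
    using y by (intro divide_right_mono mult_right_mono) auto
  then have "real (card (cliques V k G (Suc k))) \<le> y - real k"
    using card_cliques_Suc_le[OF G y(1) bound] by simp
  then have "card (cliques V k G (Suc k)) = 0"
    using y by simp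
  moreover have "finite V" using G by (simp add: is_sgraph_def)
  ultimately show ?thesis
    by (simp add: finite_cliques)
qed

lemma card_cliques_le:
  fixes L :: "'a set set" and y :: real
  assumes L: "is_sgraph V k L" and k: "1 \<le> k" "k \<le> m"
    and y: "real k \<le> y" and bound: "real (card L) \<le> y gchoose k"
  shows "(real m \<le> y \<longrightarrow> real (card (cliques V k L m)) \<le> y gchoose m)
    \<and> (y < real m \<longrightarrow> cliques V k L m = {})"
  using k(2)
proof (induction m rule: dec_induct)
  case base
  show ?case using cliques_self[OF L] bound y by simp
next
  case (step n)
  define D where "D = cliques V k L n"
  have D: "is_sgraph V n D"
    unfolding D_def using L by (intro is_sgraph_cliques) (simp add: is_sgraph_def)
  have eq: "cliques V k L (Suc n) = cliques V n D (Suc n)"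
    unfolding D_def using step.hyps(1) by (rule cliques_Suc)
  have n: "1 \<le> n" using k step.hyps(1) by linarith
  have bound_D: "real (card D) \<le> y gchoose n" if "real n \<le> y"
    using step.IH that unfolding D_def by simp
  have "cliques V n D (Suc n) = {}" if "y < real (Suc n)"
  proof (cases "y < real n")
    case True
    then have "D = {}" using step.IH unfolding D_def by simp
    then show ?thesis using cliques_empty[of n "Suc n" V] by simp
  next
    case False
    then show ?thesis using cliques_Suc_eq_empty[OF D n _ that bound_D] by simp
  qed
  then show ?case
    unfolding eq using card_cliques_Suc_le_gbinomial[OF D n _ bound_D] by simp
qed

lemma finite_degrees:
  assumes "finite V"
  shows "finite {hdeg H I | I. I \<subseteq> V \<and> card I = i}"
proof -
  have "finite {I. I \<subseteq> V \<and> card I = i}"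
    using assms by simp
  then show ?thesis
    by (rule finite_image_set)
qed

lemma hdeg_le_maxdeg:
  assumes "finite V" "I \<subseteq> V" "card I = i"
  shows "hdeg H I \<le> maxdeg V H i"
  unfolding maxdeg_def
proof (rule Max_ge)
  show "finite ({hdeg H I | I. I \<subseteq> V \<and> card I = i} \<union> {0})"
    using finite_degrees[OF assms(1)] by simp
  show "hdeg H I \<in> {hdeg H I | I. I \<subseteq> V \<and> card I = i} \<union> {0}"
    using assms(2,3) by blast
qed

lemma maxdeg_le:
  assumes "finite V" "0 \<le> b" "\<And>I. I \<subseteq> V \<Longrightarrow> card I = i \<Longrightarrow> real (hdeg H I) \<le> b"
  shows "real (maxdeg V H i) \<le> b"
proof -
  have "maxdeg V H i \<in> {hdeg H I | I. I \<subseteq> V \<and> card I = i} \<union> {0}"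
    unfolding maxdeg_def using finite_degrees[OF assms(1)] by (intro Max_in) simp_all
  then consider "maxdeg V H i = 0" | I where "I \<subseteq> V" "card I = i" "maxdeg V H i = hdeg H I"
    by auto
  then show ?thesis
    using assms(2,3) by cases simp_all
qed

lemma sgraph_eq_empty_if_hdeg_eq_0:
  assumes F: "is_sgraph V u F" and "i \<le> u"
    and deg: "\<And>I. I \<subseteq> V \<Longrightarrow> card I = i \<Longrightarrow> hdeg F I = 0"
  shows "F = {}"
proof (rule ccontr)
  assume "F \<noteq> {}"
  then obtain U where U: "U \<in> F" by blast
  then have "U \<subseteq> V" "i \<le> card U" using F \<open>i \<le> u\<close> unfolding is_sgraph_def by auto
  then obtain I where I: "I \<subseteq> U" "card I = i" by (meson obtain_subset_with_card_n)
  then have "hdeg F I = 0" using deg \<open>U \<subseteq> V\<close> by blast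
  then show False
    using U I finite_sgraph[OF F] unfolding hdeg_def by auto
qed

lemma hdeg_cliques_le:
  fixes H :: "'a set set" and y :: real
  assumes H: "is_sgraph V s H" and s: "card I < s" "s \<le> u"
    and y: "real (s - card I) \<le> y" and deg: "real (hdeg H I) \<le> y gchoose (s - card I)"
  shows "(real (u - card I) \<le> y \<longrightarrow> real (hdeg (cliques V s H u) I) \<le> y gchoose (u - card I))
    \<and> (y < real (u - card I) \<longrightarrow> hdeg (cliques V s H u) I = 0)"
proof -
  have fV: "finite V" using H by (simp add: is_sgraph_def)
  have "1 \<le> s - card I" "s - card I \<le> u - card I" using s by auto
  then have bounds: "(real (u - card I) \<le> y \<longrightarrow>
        real (card (cliques V (s - card I) (link H I) (u - card I))) \<le> y gchoose (u - card I))
      \<and> (y < real (u - card I) \<longrightarrow> cliques V (s - card I) (link H I) (u - card I) = {})"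
    using card_cliques_le[OF is_sgraph_link[OF H] _ _ y] deg by (simp add: card_link)
  have "hdeg (cliques V s H u) I \<le> card (cliques V (s - card I) (link H I) (u - card I))"
    using hdeg_cliques_le_link[OF fV] s by simp
  with bounds show ?thesis by force
qed

theorem mainTheorem7:
  fixes V :: "'a set" and H :: "'a set set" and i s u :: nat and x :: real
  assumes "1 \<le> i" and "i < s" and "s \<le> u"
    and "is_sgraph V s H"
    and "real (maxdeg V H i) \<le> (x - real i) gchoose (s - i)"
    and "x \<ge> real s"
  shows "(x < real u \<longrightarrow> cliques V s H u = {})
    \<and> (x \<ge> real u \<longrightarrow> real (maxdeg V (cliques V s H u) i) \<le> (x - real i) gchoose (u - i))"
proof -
  have fV: "finite V" using assms(4) by (simp add: is_sgraph_def)
  have degree_bound: "(real u \<le> x \<longrightarrow> real (hdeg (cliques V s H u) I) \<le> (x - real i) gchoose (u - i))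
      \<and> (x < real u \<longrightarrow> hdeg (cliques V s H u) I = 0)" if I: "I \<subseteq> V" "card I = i" for I
  proof -
    have "real (hdeg H I) \<le> (x - real i) gchoose (s - i)"
      using hdeg_le_maxdeg[OF fV I, of H] assms(5) by linarith
    then show ?thesis
      using hdeg_cliques_le[OF assms(4), of I u "x - real i"] I assms(2,3,6) by (simp add: of_nat_diff)
  qed
  show ?thesis
  proof (intro conjI impI)
    assume "x < real u"
    then have no_clique_through: "hdeg (cliques V s H u) I = 0" if "I \<subseteq> V" "card I = i" for I
      using degree_bound[OF that] by blast
    have "i \<le> u" using assms(2,3) by simp
    then show "cliques V s H u = {}"
      by (rule sgraph_eq_empty_if_hdeg_eq_0[OF is_sgraph_cliques[OF fV] _ no_clique_through])
  next
    assume "real u \<le> x"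
    then show "real (maxdeg V (cliques V s H u) i) \<le> (x - real i) gchoose (u - i)"
      using degree_bound assms(2,3) by (intro maxdeg_le[OF fV] gbinomial_nonneg) auto
  qed
qed

end
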